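(* Let $\mathcal{X}$ and $\mathcal{Y}$ be finite additive groups, $n,m\ge1$, and let $F:\mathcal{X}^n\to\mathcal{Y}^m$ be a random linear code, i.e. a random variable taking values in the set of group homomorphisms $\mathcal{X}^n\to\mathcal{Y}^m$. Let $\Sigma_n,\Sigma_m$ be uniformly distributed random permutations of the coordinates of $\mathcal{X}^n$ and $\mathcal{Y}^m$ respectively, let $\bar Y^m$ be a uniformly distributed random vector on $\mathcal{Y}^m$, with $F,\Sigma_n,\Sigma_m,\bar Y^m$ mutually independent, and define $\hat F(\mathbf{x})=\Sigma_m(F(\Sigma_n(\mathbf{x})))+\bar Y^m$. Then for all $\mathbf{x}_1\neq\mathbf{x}_2$ in $\mathcal{X}^n$ and all $\mathbf{y}_1,\mathbf{y}_2\in\mathcal{Y}^m$, $$\Pr\{\hat F(\mathbf{x}_1)=\mathbf{y}_1\}=|\mathcal{Y}|^{-m},$$ $$\Pr\{\hat F(\mathbf{x}_2)=\mathbf{y}_2\mid \hat F(\mathbf{x}_1)=\mathbf{y}_1\}=|\mathcal{Y}|^{-m}\,\alpha(F)(P_{\mathbf{x}_2-\mathbf{x}_1},P_{\mathbf{y}_2-\mathbf{y}_1}).$$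
   Context: For a sequence $\mathbf{x}\in\mathcal{X}^n$, its type $P_{\mathbf{x}}$ is the distribution on $\mathcal{X}$ given by $P_{\mathbf{x}}(a)=N(a|\mathbf{x})/n$, where $N(a|\mathbf{x})$ is the number of occurrences of $a$ in $\mathbf{x}$; $\mathcal{P}_n(\mathcal{X})$ is the set of types of sequences in $\mathcal{X}^n$ (similarly for $\mathcal{Y}^m$). A permutation of coordinates acts on $\mathcal{X}^n$ by permuting entries. For a map $f:\mathcal{X}^n\to\mathcal{Y}^m$, its joint spectrum is $S_{\mathcal{X}\mathcal{Y}}(f)(P,Q)=|\{\mathbf{x}\in\mathcal{X}^n: P_{\mathbf{x}}=P,\ P_{f(\mathbf{x})}=Q\}|/|\mathcal{X}|^n$. For $P\in\mathcal{P}_n(\mathcal{X})$, $Q\in\mathcal{P}_m(\mathcal{Y})$, with $\binom{n}{nP}=n!/\prod_{a}(nP(a))!$ and $\binom{m}{mQ}=m!/\prod_{b}(mQ(b))!$, define for a random map $F$ $$\alpha(F)(P,Q)=\frac{E[S_{\mathcal{X}\mathcal{Y}}(F)(P,Q)]}{\binom{n}{nP}\binom{m}{mQ}\,|\mathcal{X}|^{-n}|\mathcal{Y}|^{-m}}.$$ *)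

theory Defs
  imports "HOL-Probability.Probability" "HOL-Library.Function_Algebras"
begin

text \<open>Sequences in X^n are functions 'n \<Rightarrow> 'x with a finite index type 'n (|'n| = n).\<close>

definition seq_type :: "('n::finite \<Rightarrow> 'x) \<Rightarrow> ('x \<Rightarrow> real)" where
  "seq_type x = (\<lambda>a. real (card {i. x i = a}) / real CARD('n))"

definition multinom :: "nat \<Rightarrow> ('x::finite \<Rightarrow> real) \<Rightarrow> real" where
  "multinom n P = fact n / (\<Prod>a\<in>UNIV. fact (nat (round (real n * P a))))"

definition joint_spectrum ::
  "(('n::finite \<Rightarrow> 'x::finite) \<Rightarrow> ('m::finite \<Rightarrow> 'y)) \<Rightarrow> ('x \<Rightarrow> real) \<Rightarrow> ('y \<Rightarrow> real) \<Rightarrow> real" where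
  "joint_spectrum f P Q =
     real (card {x :: 'n \<Rightarrow> 'x. seq_type x = P \<and> seq_type (f x) = Q}) / real CARD('x) ^ CARD('n)"

definition alpha ::
  "(('n::finite \<Rightarrow> 'x::finite) \<Rightarrow> ('m::finite \<Rightarrow> 'y::finite)) pmf \<Rightarrow> ('x \<Rightarrow> real) \<Rightarrow> ('y \<Rightarrow> real) \<Rightarrow> real" where
  "alpha F P Q =
     measure_pmf.expectation F (\<lambda>f. joint_spectrum f P Q) /
     (multinom CARD('n) P * multinom CARD('m) Q
        * inverse (real CARD('x) ^ CARD('n)) * inverse (real CARD('y) ^ CARD('m)))"

definition is_additive_hom :: "('a::ab_group_add \<Rightarrow> 'b::ab_group_add) \<Rightarrow> bool" where
  "is_additive_hom f \<longleftrightarrow> (\<forall>u v. f (u + v) = f u + f v)"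

definition randomize ::
  "(('n::finite \<Rightarrow> 'x) \<Rightarrow> ('m::finite \<Rightarrow> 'y::{finite,ab_group_add})) pmf
     \<Rightarrow> (('n \<Rightarrow> 'x) \<Rightarrow> ('m \<Rightarrow> 'y)) pmf" where
  "randomize F =
     bind_pmf F (\<lambda>f.
     bind_pmf (pmf_of_set {p :: 'n \<Rightarrow> 'n. p permutes UNIV}) (\<lambda>sg.
     bind_pmf (pmf_of_set {p :: 'm \<Rightarrow> 'm. p permutes UNIV}) (\<lambda>tu.
     bind_pmf (pmf_of_set (UNIV :: ('m \<Rightarrow> 'y) set)) (\<lambda>ybar.
       return_pmf (\<lambda>x. ((f (x \<circ> sg)) \<circ> tu) + ybar)))))"

end

theory Submission
  imports Defs
begin

(* Since the uniform vector Ybar is independent of everything else, Fhat(x1) is uniform, and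
   given Fhat(x1) = y1 the event Fhat(x2) = y2 becomes, by linearity of F,
   Sigma_m(F(Sigma_n(x2 - x1))) = y2 - y1.  Composing a sequence w with a uniform random
   coordinate permutation yields the uniform distribution on the type class of w, whose size is
   the multinomial coefficient by orbit-stabilizer.  Averaging over Sigma_m and then over Sigma_n
   thus turns the probability for a fixed code f into the number of sequences of type P_(x2-x1)
   that f maps to type P_(y2-y1), which is |Y|^-2m alpha(f); and alpha(F) is the average of
   alpha(f) over F. *)

lemma inj_imp_permutes_UNIV:
  fixes \<sigma> :: "'k::finite \<Rightarrow> 'k"
  assumes "inj \<sigma>"
  shows "\<sigma> permutes UNIV"
  using assms finite_UNIV_inj_surj[of \<sigma>] by (intro bij_imp_permutes) (auto simp: bij_def)

definition seq_type_class :: "('k::finite \<Rightarrow> 'a) \<Rightarrow> ('k \<Rightarrow> 'a) set" where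
  "seq_type_class w = {v. seq_type v = seq_type w}"

lemma card_seq_type_class_gt_0: "card (seq_type_class (w :: 'k::finite \<Rightarrow> 'a::finite)) > 0"
  by (rule card_gt_0_iff[THEN iffD2]) (auto simp: seq_type_class_def)

lemma seq_type_comp_permutes:
  fixes w :: "'k::finite \<Rightarrow> 'a"
  assumes "\<sigma> permutes UNIV"
  shows "seq_type (w \<circ> \<sigma>) = seq_type w"
proof -
  have "{i. w (\<sigma> i) = a} = inv \<sigma> ` {i. w i = a}" for a
    using assms by (auto simp: permutes_inverses image_iff intro!: exI[of _ "\<sigma> _"])
  then show ?thesis
    using permutes_inj_on[OF permutes_inv[OF assms]] by (simp add: seq_type_def card_image)
qed

lemma seq_type_eq_imp_permutes:
  fixes w z :: "'k::finite \<Rightarrow> 'a"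
  assumes "seq_type z = seq_type w"
  obtains \<sigma> where "\<sigma> permutes UNIV" "z = w \<circ> \<sigma>"
proof -
  have "card {i. z i = a} = card {i. w i = a}" for a
    using assms by (simp add: seq_type_def fun_eq_iff)
  then have "\<exists>h. bij_betw h {i. z i = a} {i. w i = a}" for a
    by (intro finite_same_card_bij) auto
  then obtain h where h: "\<And>a. bij_betw (h a) {i. z i = a} {i. w i = a}"
    by metis
  define \<sigma> where "\<sigma> i = h (z i) i" for i
  have w\<sigma>: "w (\<sigma> i) = z i" for i
    using bij_betw_apply[OF h[of "z i"], of i] by (simp add: \<sigma>_def)
  have "inj \<sigma>"
  proof (rule injI)
    fix i j assume "\<sigma> i = \<sigma> j"
    then have "z i = z j"
      by (metis w\<sigma>)
    moreover from this \<open>\<sigma> i = \<sigma> j\<close> have "h (z i) i = h (z i) j"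
      by (simp add: \<sigma>_def)
    ultimately show "i = j"
      using bij_betw_imp_inj_on[OF h[of "z i"]] by (auto dest: inj_onD)
  qed
  then have "\<sigma> permutes UNIV"
    by (rule inj_imp_permutes_UNIV)
  then show ?thesis
    using that w\<sigma> by (auto simp: fun_eq_iff)
qed

(* A permutation fixes w iff it permutes each level set of w. *)
lemma card_stabilizer:
  fixes w :: "'k::finite \<Rightarrow> 'a::finite"
  shows "card {\<sigma>. \<sigma> permutes UNIV \<and> w \<circ> \<sigma> = w} = (\<Prod>a\<in>UNIV. fact (card {i. w i = a}))"
proof -
  let ?B = "\<lambda>a. {p. p permutes {i. w i = a}}"
  let ?S = "{\<sigma>. \<sigma> permutes UNIV \<and> w \<circ> \<sigma> = w}"
  have "bij_betw (\<lambda>ps i. ps (w i) i) (PiE UNIV ?B) ?S"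
  proof (rule bij_betwI[where g = "\<lambda>\<sigma> a i. if w i = a then \<sigma> i else i"])
    show "(\<lambda>ps i. ps (w i) i) \<in> PiE UNIV ?B \<rightarrow> ?S"
    proof
      fix ps assume "ps \<in> PiE UNIV ?B"
      then have ps: "ps a permutes {i. w i = a}" for a
        by auto
      have w_ps: "w (ps (w i) i) = w i" for i
        using permutes_in_image[OF ps[of "w i"], of i] by simp
      have "inj (\<lambda>i. ps (w i) i)"
        by (rule injI) (metis w_ps permutes_inj[OF ps] injD)
      then show "(\<lambda>i. ps (w i) i) \<in> ?S"
        using inj_imp_permutes_UNIV w_ps by auto
    qed
    show "(\<lambda>\<sigma> a i. if w i = a then \<sigma> i else i) \<in> ?S \<rightarrow> PiE UNIV ?B"
    proof
      fix \<sigma> assume "\<sigma> \<in> ?S"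
      then have \<sigma>: "\<sigma> permutes UNIV" and w_\<sigma>: "\<And>i. w (\<sigma> i) = w i"
        by (auto simp: fun_eq_iff)
      have "\<sigma> ` {i. w i = a} = {i. w i = a}" for a
        by (intro endo_inj_surj) (auto simp: w_\<sigma> permutes_inj_on[OF \<sigma>])
      then have "bij_betw \<sigma> {i. w i = a} {i. w i = a}" for a
        using permutes_inj_on[OF \<sigma>] by (auto simp: bij_betw_def)
      then have "bij_betw (\<lambda>i. if w i = a then \<sigma> i else i) {i. w i = a} {i. w i = a}" for a
        by (rule bij_betw_cong[THEN iffD1, rotated]) simp
      then have "(\<lambda>i. if w i = a then \<sigma> i else i) permutes {i. w i = a}" for a
        by (intro bij_imp_permutes) auto
      then show "(\<lambda>a i. if w i = a then \<sigma> i else i) \<in> PiE UNIV ?B"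
        by auto
    qed
    show "(\<lambda>a i. if w i = a then ps (w i) i else i) = ps" if "ps \<in> PiE UNIV ?B" for ps
      using that by (auto simp: fun_eq_iff intro: permutes_not_in[symmetric])
  qed auto
  then have "card ?S = card (PiE UNIV ?B)"
    by (simp add: bij_betw_same_card)
  then show ?thesis
    by (simp add: card_PiE card_permutations)
qed

lemma card_permutes_fiber:
  fixes w z :: "'k::finite \<Rightarrow> 'a"
  assumes "seq_type z = seq_type w"
  shows "card {\<sigma>. \<sigma> permutes UNIV \<and> w \<circ> \<sigma> = z} = card {\<sigma>. \<sigma> permutes UNIV \<and> w \<circ> \<sigma> = w}"
proof -
  obtain \<sigma>\<^sub>0 where \<sigma>\<^sub>0: "\<sigma>\<^sub>0 permutes UNIV" and z: "z = w \<circ> \<sigma>\<^sub>0"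
    using seq_type_eq_imp_permutes[OF assms] .
  have "bij_betw (\<lambda>\<sigma>. \<sigma> \<circ> \<sigma>\<^sub>0)
      {\<sigma>. \<sigma> permutes UNIV \<and> w \<circ> \<sigma> = w} {\<sigma>. \<sigma> permutes UNIV \<and> w \<circ> \<sigma> = z}"
  proof (rule bij_betwI[where g = "\<lambda>\<tau>. \<tau> \<circ> inv \<sigma>\<^sub>0"])
    have "w \<circ> (\<sigma> \<circ> \<sigma>\<^sub>0) = z" if "w \<circ> \<sigma> = w" for \<sigma>
      using that by (metis z comp_assoc)
    then show "(\<lambda>\<sigma>. \<sigma> \<circ> \<sigma>\<^sub>0) \<in> {\<sigma>. \<sigma> permutes UNIV \<and> w \<circ> \<sigma> = w} \<rightarrow> {\<tau>. \<tau> permutes UNIV \<and> w \<circ> \<tau> = z}"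
      by (auto simp: permutes_compose \<sigma>\<^sub>0)
    have "w \<circ> \<tau> \<circ> inv \<sigma>\<^sub>0 = w" if "w \<circ> \<tau> = z" for \<tau>
      using that by (simp add: z comp_assoc permutes_inv_o[OF \<sigma>\<^sub>0])
    then show "(\<lambda>\<tau>. \<tau> \<circ> inv \<sigma>\<^sub>0) \<in> {\<tau>. \<tau> permutes UNIV \<and> w \<circ> \<tau> = z} \<rightarrow> {\<sigma>. \<sigma> permutes UNIV \<and> w \<circ> \<sigma> = w}"
      by (auto simp: comp_assoc permutes_compose permutes_inv \<sigma>\<^sub>0)
  qed (auto simp: comp_assoc permutes_inv_o[OF \<sigma>\<^sub>0])
  then show ?thesis
    by (simp add: bij_betw_same_card)
qed

lemma fact_eq_card_seq_type_class_mult_card_stabilizer: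
  fixes w :: "'k::finite \<Rightarrow> 'a::finite"
  shows "fact CARD('k) = card (seq_type_class w) * card {\<sigma>. \<sigma> permutes UNIV \<and> w \<circ> \<sigma> = w}"
proof -
  have "{z\<in>seq_type_class w. w \<circ> \<sigma> = z} = {w \<circ> \<sigma>}" if "\<sigma> permutes UNIV" for \<sigma>
    using that by (auto simp: seq_type_class_def seq_type_comp_permutes)
  then have "(\<Sum>z\<in>seq_type_class w. card {\<sigma>\<in>{\<sigma>. \<sigma> permutes UNIV}. w \<circ> \<sigma> = z})
      = 1 * card {\<sigma>::'k \<Rightarrow> 'k. \<sigma> permutes UNIV}"
    by (intro sum_multicount) auto
  moreover have "card {\<sigma>\<in>{\<sigma>. \<sigma> permutes UNIV}. w \<circ> \<sigma> = z} = card {\<sigma>. \<sigma> permutes UNIV \<and> w \<circ> \<sigma> = w}"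
    if "z \<in> seq_type_class w" for z
    using card_permutes_fiber[of z w] that by (simp add: seq_type_class_def)
  ultimately show ?thesis
    by (simp add: card_permutations)
qed

lemma card_seq_type_class_eq:
  fixes w :: "'k::finite \<Rightarrow> 'a::finite"
  shows "real (card (seq_type_class w)) = fact CARD('k) / real (card {\<sigma>. \<sigma> permutes UNIV \<and> w \<circ> \<sigma> = w})"
proof -
  let ?stab = "{\<sigma>. \<sigma> permutes UNIV \<and> w \<circ> \<sigma> = w}"
  have "card ?stab > 0"
    by (rule card_gt_0_iff[THEN iffD2]) (auto intro: permutes_id)
  moreover have "real (fact CARD('k)) = real (card (seq_type_class w) * card ?stab)"
    by (simp only: fact_eq_card_seq_type_class_mult_card_stabilizer[of w])
  then have "fact CARD('k) = real (card (seq_type_class w)) * real (card ?stab)"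
    by (simp only: of_nat_fact of_nat_mult)
  ultimately show ?thesis
    by (metis nonzero_mult_div_cancel_right of_nat_0_less_iff less_irrefl)
qed

lemma multinom_seq_type:
  fixes w :: "'k::finite \<Rightarrow> 'a::finite"
  shows "multinom CARD('k) (seq_type w) = card (seq_type_class w)"
proof -
  have "nat (round (real CARD('k) * seq_type w a)) = card {i. w i = a}" for a
    by (simp add: seq_type_def)
  then show ?thesis
    by (simp add: multinom_def card_stabilizer card_seq_type_class_eq)
qed

lemma map_pmf_comp_uniform_permutation:
  fixes w :: "'k::finite \<Rightarrow> 'a::finite"
  shows "map_pmf (\<lambda>\<sigma>. w \<circ> \<sigma>) (pmf_of_set {\<sigma>. \<sigma> permutes UNIV}) = pmf_of_set (seq_type_class w)"
proof (rule pmf_eqI)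
  fix z :: "'k \<Rightarrow> 'a"
  let ?stab = "{\<sigma>. \<sigma> permutes UNIV \<and> w \<circ> \<sigma> = w}"
  have class_ne: "seq_type_class w \<noteq> {}"
    by (auto simp: seq_type_class_def)
  have "pmf (map_pmf (\<lambda>\<sigma>. w \<circ> \<sigma>) (pmf_of_set {\<sigma>. \<sigma> permutes UNIV})) z
      = card {\<sigma>. \<sigma> permutes UNIV \<and> w \<circ> \<sigma> = z} / fact CARD('k)"
    by (subst pmf_map, subst measure_pmf_of_set)
      (auto simp: card_permutations Int_def vimage_def intro: permutes_id)
  also have "\<dots> = pmf (pmf_of_set (seq_type_class w)) z"
  proof (cases "z \<in> seq_type_class w")
    case True
    then have "card {\<sigma>. \<sigma> permutes UNIV \<and> w \<circ> \<sigma> = z} = card ?stab"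
      using card_permutes_fiber[of z w] by (simp add: seq_type_class_def)
    moreover have "pmf (pmf_of_set (seq_type_class w)) z = 1 / real (card (seq_type_class w))"
      using True class_ne by simp
    ultimately show ?thesis
      by (simp only: card_seq_type_class_eq divide_divide_eq_right mult_1)
  next
    case False
    then have "{\<sigma>. \<sigma> permutes UNIV \<and> w \<circ> \<sigma> = z} = {}"
      by (auto simp: seq_type_class_def seq_type_comp_permutes)
    with False show ?thesis
      using class_ne by simp
  qed
  finally show "pmf (map_pmf (\<lambda>\<sigma>. w \<circ> \<sigma>) (pmf_of_set {\<sigma>. \<sigma> permutes UNIV})) z
      = pmf (pmf_of_set (seq_type_class w)) z" .
qed

lemma expectation_comp_uniform_permutation:
  fixes w :: "'k::finite \<Rightarrow> 'a::finite" and \<phi> :: "('k \<Rightarrow> 'a) \<Rightarrow> real"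
  shows "measure_pmf.expectation (pmf_of_set {\<sigma>. \<sigma> permutes UNIV}) (\<lambda>\<sigma>. \<phi> (w \<circ> \<sigma>))
    = (\<Sum>v\<in>seq_type_class w. \<phi> v) / card (seq_type_class w)"
proof -
  have "measure_pmf.expectation (pmf_of_set {\<sigma>. \<sigma> permutes UNIV}) (\<lambda>\<sigma>. \<phi> (w \<circ> \<sigma>))
      = measure_pmf.expectation (map_pmf (\<lambda>\<sigma>. w \<circ> \<sigma>) (pmf_of_set {\<sigma>. \<sigma> permutes UNIV})) \<phi>"
    by simp
  also have "\<dots> = measure_pmf.expectation (pmf_of_set (seq_type_class w)) \<phi>"
    by (simp only: map_pmf_comp_uniform_permutation)
  also have "\<dots> = (\<Sum>v\<in>seq_type_class w. \<phi> v) / card (seq_type_class w)"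
    by (rule integral_pmf_of_set) (auto simp: seq_type_class_def)
  finally show ?thesis .
qed

lemma measure_bind_pmf:
  "measure_pmf.prob (bind_pmf M N) X = measure_pmf.expectation M (\<lambda>x. measure_pmf.prob (N x) X)"
  unfolding measure_pmf_bind
proof (rule measure_pmf.measure_bind[where N = "count_space UNIV"])
  show "(\<lambda>x. measure_pmf (N x)) \<in> measure_pmf M \<rightarrow>\<^sub>M subprob_algebra (count_space UNIV)"
    using measurable_measure_pmf[of N] by (simp add: measurable_def)
qed auto

lemma prob_uniform_add_eq:
  fixes a c :: "'b::{finite,ab_group_add}"
  shows "measure_pmf.prob (pmf_of_set UNIV) {b. a + b = c} = 1 / CARD('b)"
proof -
  have "{b. a + b = c} = {c - a}"
    by (auto simp: algebra_simps)
  then show ?thesis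
    by (simp add: measure_pmf_of_set)
qed

lemma prob_uniform_add_eq_pair:
  fixes a\<^sub>1 a\<^sub>2 c\<^sub>1 c\<^sub>2 :: "'b::{finite,ab_group_add}"
  shows "measure_pmf.prob (pmf_of_set UNIV) {b. a\<^sub>2 + b = c\<^sub>2 \<and> a\<^sub>1 + b = c\<^sub>1}
    = (if a\<^sub>2 - a\<^sub>1 = c\<^sub>2 - c\<^sub>1 then 1 / CARD('b) else 0)"
proof -
  have "{b. a\<^sub>2 + b = c\<^sub>2 \<and> a\<^sub>1 + b = c\<^sub>1} = (if a\<^sub>2 - a\<^sub>1 = c\<^sub>2 - c\<^sub>1 then {c\<^sub>1 - a\<^sub>1} else {})"
    by (auto simp: algebra_simps)
  then show ?thesis
    by (simp add: measure_pmf_of_set)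
qed

lemma additive_hom_diff:
  assumes "is_additive_hom f"
  shows "f (u - v) = f u - f v"
  using assms unfolding is_additive_hom_def by (metis add_diff_cancel diff_add_cancel)

lemma randomize_eq_bind: "randomize F = bind_pmf F (\<lambda>f. randomize (return_pmf f))"
  by (simp add: randomize_def bind_return_pmf)

lemma randomize_return_pmf:
  "randomize (return_pmf f) =
     bind_pmf (pmf_of_set {\<sigma>. \<sigma> permutes UNIV}) (\<lambda>\<sigma>.
     bind_pmf (pmf_of_set {\<tau>. \<tau> permutes UNIV}) (\<lambda>\<tau>.
     map_pmf (\<lambda>b x. (f (x \<circ> \<sigma>) \<circ> \<tau>) + b) (pmf_of_set UNIV)))"
  by (simp add: randomize_def bind_return_pmf map_pmf_def)

lemma prob_randomize_return_pmf_one_point: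
  fixes f :: "('n::finite \<Rightarrow> 'x) \<Rightarrow> ('m::finite \<Rightarrow> 'y::{finite,ab_group_add})"
  shows "measure_pmf.prob (randomize (return_pmf f)) {g. g x\<^sub>1 = y\<^sub>1} = 1 / real CARD('y) ^ CARD('m)"
  by (simp add: randomize_return_pmf measure_bind_pmf vimage_def prob_uniform_add_eq card_fun)

lemma alpha_eq_expectation_alpha_return_pmf:
  "alpha F P Q = measure_pmf.expectation F (\<lambda>f. alpha (return_pmf f) P Q)"
  by (simp add: alpha_def)

lemma alpha_return_pmf_seq_type:
  fixes f :: "('n::finite \<Rightarrow> 'x::finite) \<Rightarrow> ('m::finite \<Rightarrow> 'y::finite)"
    and u :: "'n \<Rightarrow> 'x" and v :: "'m \<Rightarrow> 'y"
  shows "alpha (return_pmf f) (seq_type u) (seq_type v)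
    = card {z \<in> seq_type_class u. seq_type (f z) = seq_type v} * real CARD('y) ^ CARD('m)
      / (card (seq_type_class u) * card (seq_type_class v))"
  using card_seq_type_class_gt_0[of u] card_seq_type_class_gt_0[of v]
  by (simp add: alpha_def joint_spectrum_def multinom_seq_type field_simps)
    (simp add: seq_type_class_def)

lemma prob_randomize_return_pmf_two_points:
  fixes f :: "('n::finite \<Rightarrow> 'x::{finite,ab_group_add}) \<Rightarrow> ('m::finite \<Rightarrow> 'y::{finite,ab_group_add})"
  assumes "is_additive_hom f"
  shows "measure_pmf.prob (randomize (return_pmf f)) {g. g x\<^sub>2 = y\<^sub>2 \<and> g x\<^sub>1 = y\<^sub>1}
    = alpha (return_pmf f) (seq_type (x\<^sub>2 - x\<^sub>1)) (seq_type (y\<^sub>2 - y\<^sub>1)) / (real CARD('y) ^ CARD('m))\<^sup>2"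
proof -
  define K where "K = real CARD('y) ^ CARD('m)"
  define dx where "dx = x\<^sub>2 - x\<^sub>1"
  define dy where "dy = y\<^sub>2 - y\<^sub>1"
  define \<psi> where "\<psi> g = (if seq_type g = seq_type dy then 1 / (card (seq_type_class dy) * K) else 0)"
    for g :: "'m \<Rightarrow> 'y"
  have "(f (x\<^sub>2 \<circ> \<sigma>) \<circ> \<tau>) - (f (x\<^sub>1 \<circ> \<sigma>) \<circ> \<tau>) = f (dx \<circ> \<sigma>) \<circ> \<tau>"
    for \<sigma> :: "'n \<Rightarrow> 'n" and \<tau> :: "'m \<Rightarrow> 'm"
  proof -
    have "(f (x\<^sub>2 \<circ> \<sigma>) \<circ> \<tau>) - (f (x\<^sub>1 \<circ> \<sigma>) \<circ> \<tau>) = (f (x\<^sub>2 \<circ> \<sigma>) - f (x\<^sub>1 \<circ> \<sigma>)) \<circ> \<tau>"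
      by (simp add: fun_eq_iff)
    also have "\<dots> = f ((x\<^sub>2 \<circ> \<sigma>) - (x\<^sub>1 \<circ> \<sigma>)) \<circ> \<tau>"
      by (simp only: additive_hom_diff[OF assms])
    also have "(x\<^sub>2 \<circ> \<sigma>) - (x\<^sub>1 \<circ> \<sigma>) = dx \<circ> \<sigma>"
      by (simp add: dx_def fun_eq_iff)
    finally show ?thesis .
  qed
  then have ybar_stage: "measure_pmf.prob (pmf_of_set UNIV)
      {b. (f (x\<^sub>2 \<circ> \<sigma>) \<circ> \<tau>) + b = y\<^sub>2 \<and> (f (x\<^sub>1 \<circ> \<sigma>) \<circ> \<tau>) + b = y\<^sub>1}
      = (if f (dx \<circ> \<sigma>) \<circ> \<tau> = dy then 1 / K else 0)" for \<sigma> :: "'n \<Rightarrow> 'n" and \<tau> :: "'m \<Rightarrow> 'm"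
    by (simp add: prob_uniform_add_eq_pair card_fun K_def dy_def)
  have tau_stage: "measure_pmf.expectation (pmf_of_set {\<tau>. \<tau> permutes UNIV})
      (\<lambda>\<tau>. if g \<circ> \<tau> = dy then 1 / K else 0) = \<psi> g" for g
  proof -
    have "(\<Sum>v\<in>seq_type_class g. if v = dy then 1 / K else 0) / card (seq_type_class g) = \<psi> g"
      by (auto simp: \<psi>_def seq_type_class_def)
    then show ?thesis
      using expectation_comp_uniform_permutation[of "\<lambda>v. if v = dy then 1 / K else 0" g] by simp
  qed
  have "measure_pmf.prob (randomize (return_pmf f)) {g. g x\<^sub>2 = y\<^sub>2 \<and> g x\<^sub>1 = y\<^sub>1}
      = measure_pmf.expectation (pmf_of_set {\<sigma>. \<sigma> permutes UNIV}) (\<lambda>\<sigma>. \<psi> (f (dx \<circ> \<sigma>)))"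
    by (simp add: randomize_return_pmf measure_bind_pmf vimage_def ybar_stage tau_stage)
  also have "\<dots> = (\<Sum>v\<in>seq_type_class dx. \<psi> (f v)) / card (seq_type_class dx)"
    by (rule expectation_comp_uniform_permutation)
  also have "\<dots> = card {v \<in> seq_type_class dx. seq_type (f v) = seq_type dy}
      / (card (seq_type_class dx) * card (seq_type_class dy) * K)"
    by (simp add: \<psi>_def sum.If_cases Int_def mult_ac)
  also have "\<dots> = alpha (return_pmf f) (seq_type dx) (seq_type dy) / K\<^sup>2"
    using card_seq_type_class_gt_0[of dx] card_seq_type_class_gt_0[of dy]
    by (simp add: alpha_return_pmf_seq_type K_def power2_eq_square field_simps)
  finally show ?thesis
    by (simp add: K_def dx_def dy_def)
qed

theorem proposition5:
  fixes F :: "(('n::finite \<Rightarrow> 'x::{finite,ab_group_add}) \<Rightarrow> ('m::finite \<Rightarrow> 'y::{finite,ab_group_add})) pmf"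
    and x1 x2 :: "'n \<Rightarrow> 'x" and y1 y2 :: "'m \<Rightarrow> 'y"
  assumes "\<forall>f \<in> set_pmf F. is_additive_hom f"
    and "x1 \<noteq> x2"
  shows "(measure_pmf.prob (randomize F) {g. g x1 = y1} = inverse (real CARD('y) ^ CARD('m)))
    \<and> (measure_pmf.prob (randomize F) {g. g x2 = y2 \<and> g x1 = y1}
           / measure_pmf.prob (randomize F) {g. g x1 = y1}
         = inverse (real CARD('y) ^ CARD('m)) * alpha F (seq_type (x2 - x1)) (seq_type (y2 - y1)))"
proof -
  define K where "K = real CARD('y) ^ CARD('m)"
  let ?\<alpha> = "\<lambda>F. alpha F (seq_type (x2 - x1)) (seq_type (y2 - y1))"
  have first: "measure_pmf.prob (randomize F) {g. g x1 = y1} = 1 / K"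
    by (subst randomize_eq_bind) (simp add: measure_bind_pmf prob_randomize_return_pmf_one_point K_def)
  have "measure_pmf.prob (randomize F) {g. g x2 = y2 \<and> g x1 = y1}
      = measure_pmf.expectation F (\<lambda>f. measure_pmf.prob (randomize (return_pmf f)) {g. g x2 = y2 \<and> g x1 = y1})"
    by (subst randomize_eq_bind) (rule measure_bind_pmf)
  also have "\<dots> = measure_pmf.expectation F (\<lambda>f. ?\<alpha> (return_pmf f) / K\<^sup>2)"
    using assms(1)
    by (intro integral_cong_AE) (auto simp: AE_measure_pmf_iff prob_randomize_return_pmf_two_points K_def)
  also have "\<dots> = ?\<alpha> F / K\<^sup>2"
    by (simp add: alpha_eq_expectation_alpha_return_pmf[of F])
  finally have joint: "measure_pmf.prob (randomize F) {g. g x2 = y2 \<and> g x1 = y1} = ?\<alpha> F / K\<^sup>2" .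
  have "K > 0"
    by (simp add: K_def)
  then show ?thesis
    unfolding first joint K_def[symmetric] by (simp add: power2_eq_square divide_inverse_commute)
qed

end
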